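(* For all integers $m,k\ge 0$, the Wiener index of $P_{m,k}=J([m]\times[k])$ is \[ \d(P_{m,k})=\frac{mk}{4m+4k+2}\binom{2m+2k+2}{2k+1}. \]
   Context: For a finite poset $P$, $J(P)$ is the lattice of order ideals of $P$ ordered by inclusion; $[m]$ is the $m$-element chain and $[m]\times[k]$ has the componentwise order. For a finite poset $Q$, $\d(Q)=\sum_{(p,q)\in Q\times Q}\d(p,q)$, where $\d(p,q)$ is the graph distance between $p$ and $q$ in the Hasse diagram of $Q$ (edges = cover relations), and the sum is over ordered pairs. *)

theory Defs
  imports Complex_Main
begin

definition order_ideals :: "('a \<Rightarrow> 'a \<Rightarrow> bool) \<Rightarrow> 'a set \<Rightarrow> 'a set set" where
  "order_ideals le P = {I. I \<subseteq> P \<and> (\<forall>x\<in>I. \<forall>y\<in>P. le y x \<longrightarrow> y \<in> I)}"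

definition chain :: "nat \<Rightarrow> nat set" where
  "chain m = {1..m}"

definition prod_le :: "nat \<times> nat \<Rightarrow> nat \<times> nat \<Rightarrow> bool" where
  "prod_le p q \<longleftrightarrow> fst p \<le> fst q \<and> snd p \<le> snd q"

definition covers :: "'a set \<Rightarrow> ('a \<Rightarrow> 'a \<Rightarrow> bool) \<Rightarrow> 'a \<Rightarrow> 'a \<Rightarrow> bool" where
  "covers Q le x y \<longleftrightarrow> x \<in> Q \<and> y \<in> Q \<and> le x y \<and> x \<noteq> y \<and>
     \<not> (\<exists>z\<in>Q. le x z \<and> le z y \<and> z \<noteq> x \<and> z \<noteq> y)"

definition hasse_edges :: "'a set \<Rightarrow> ('a \<Rightarrow> 'a \<Rightarrow> bool) \<Rightarrow> ('a \<times> 'a) set" where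
  "hasse_edges Q le = {(x, y). covers Q le x y \<or> covers Q le y x}"

definition hasse_dist :: "'a set \<Rightarrow> ('a \<Rightarrow> 'a \<Rightarrow> bool) \<Rightarrow> 'a \<Rightarrow> 'a \<Rightarrow> nat" where
  "hasse_dist Q le x y = (LEAST n. (x, y) \<in> (hasse_edges Q le) ^^ n)"

definition wiener :: "'a set \<Rightarrow> ('a \<Rightarrow> 'a \<Rightarrow> bool) \<Rightarrow> nat" where
  "wiener Q le = (\<Sum>p\<in>Q. \<Sum>q\<in>Q. hasse_dist Q le p q)"

text \<open>P_{m,k} = J([m] x [k]), ordered by inclusion.\<close>
definition P_mk :: "nat \<Rightarrow> nat \<Rightarrow> (nat \<times> nat) set set" where
  "P_mk m k = order_ideals prod_le (chain m \<times> chain k)"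

end

theory Submission
  imports Defs "HOL-Computational_Algebra.Formal_Power_Series"
begin

text \<open>
  Two ideals of [m] \<times> [k] are joined by a Hasse path that adds or removes one cell at a time,
  so their distance in J([m] \<times> [k]) is the size of their symmetric difference. An ideal is
  the region below a lattice path with m up-steps among m + k steps; writing U for the set of
  up-step positions, the symmetric difference of two ideals becomes
  \<Sum>t. |#{u \<in> U. u \<le> t} - #{v \<in> V. v \<le> t}|. Summed over all pairs of m-subsets of
  {1..m+k} this is twice the total positive part, which satisfies a Pascal-type recursion in
  n = m + k and is therefore a convolution of squared binomial coefficients with an explicit
  source term. With D = (1 - (1 + y) x)^2 - 4 y x^2, the squared binomials have generating
  function D^(-1/2) and the source has x^2 y D^(-3/2), so the convolution is x^2 y / D^2, whose
  coefficients are the closed form. Each of these series identities is checked coefficientwise as a linear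
  recurrence after multiplying by D.
\<close>

section \<open>Distances in lattices of order ideals\<close>

lemma order_ideals_subset: "I \<in> order_ideals le P \<Longrightarrow> I \<subseteq> P"
  unfolding order_ideals_def by auto

lemma order_ideals_downward:
  "I \<in> order_ideals le P \<Longrightarrow> x \<in> I \<Longrightarrow> y \<in> P \<Longrightarrow> le y x \<Longrightarrow> y \<in> I"
  unfolding order_ideals_def by auto

context
  fixes P :: "'a set" and le :: "'a \<Rightarrow> 'a \<Rightarrow> bool" and rank :: "'a \<Rightarrow> nat"
  assumes rank_less: "\<And>x y. x \<in> P \<Longrightarrow> y \<in> P \<Longrightarrow> le y x \<Longrightarrow> y \<noteq> x \<Longrightarrow> rank y < rank x"
begin

lemma insert_rank_minimal_order_ideal:
  assumes I: "I \<in> order_ideals le P" and J: "J \<in> order_ideals le P" and z: "z \<in> J - I"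
    and minimal: "\<forall>y\<in>J - I. rank z \<le> rank y"
  shows "insert z I \<in> order_ideals le P"
  unfolding order_ideals_def
proof (intro CollectI conjI ballI impI)
  show "insert z I \<subseteq> P"
    using z order_ideals_subset[OF I] order_ideals_subset[OF J] by auto
next
  fix x y assume x: "x \<in> insert z I" and y: "y \<in> P" and "le y x"
  show "y \<in> insert z I"
  proof (cases "x = z")
    case True
    with z have "y \<in> J" using order_ideals_downward[OF J _ y \<open>le y x\<close>] by simp
    show ?thesis
    proof (rule ccontr)
      assume "y \<notin> insert z I"
      with \<open>y \<in> J\<close> have "rank z \<le> rank y" using minimal by simp
      moreover have "z \<in> P" using z order_ideals_subset[OF J] by auto
      ultimately show False
        using rank_less[OF _ y \<open>le y x\<close>] True \<open>y \<notin> insert z I\<close> by fastforce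
    qed
  next
    case False
    with x have "x \<in> I" by simp
    then show ?thesis using order_ideals_downward[OF I _ y \<open>le y x\<close>] by simp
  qed
qed

lemma remove_rank_maximal_order_ideal:
  assumes I: "I \<in> order_ideals le P" and J: "J \<in> order_ideals le P" and z: "z \<in> I - J"
    and maximal: "\<forall>y\<in>I - J. rank y \<le> rank z"
  shows "I - {z} \<in> order_ideals le P"
  unfolding order_ideals_def
proof (intro CollectI conjI ballI impI)
  show "I - {z} \<subseteq> P" using order_ideals_subset[OF I] by auto
next
  fix x y assume x: "x \<in> I - {z}" and y: "y \<in> P" and "le y x"
  have xP: "x \<in> P" using x order_ideals_subset[OF I] by auto
  show "y \<in> I - {z}"
  proof
    show "y \<in> I" using order_ideals_downward[OF I _ y \<open>le y x\<close>] x by auto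
    show "y \<notin> {z}"
    proof
      assume "y \<in> {z}"
      then have "x \<notin> J" using order_ideals_downward[OF J _ y \<open>le y x\<close>] z by auto
      then have "rank x \<le> rank z" using maximal x by auto
      moreover have "rank z < rank x" using rank_less[OF xP y \<open>le y x\<close>] x \<open>y \<in> {z}\<close> by auto
      ultimately show False by simp
    qed
  qed
qed

lemma covers_order_ideals_Diff:
  assumes "covers (order_ideals le P) (\<subseteq>) X Y"
  shows "card (Y - X) = 1"
proof -
  have X: "X \<in> order_ideals le P" and Y: "Y \<in> order_ideals le P" and "X \<subset> Y"
    and no_between: "\<not> (\<exists>Z\<in>order_ideals le P. X \<subseteq> Z \<and> Z \<subseteq> Y \<and> Z \<noteq> X \<and> Z \<noteq> Y)"
    using assms unfolding covers_def by auto
  obtain z where z: "z \<in> Y - X" and minimal: "\<forall>y\<in>Y - X. rank z \<le> rank y"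
    using ex_has_least_nat[of "\<lambda>z. z \<in> Y - X" _ rank] \<open>X \<subset> Y\<close> by blast
  have "insert z X \<in> order_ideals le P"
    by (rule insert_rank_minimal_order_ideal[OF X Y z minimal])
  with no_between z \<open>X \<subset> Y\<close> have "insert z X = Y" by blast
  with z have "Y - X = {z}" by auto
  then show ?thesis by simp
qed

lemma hasse_edge_order_ideals:
  assumes "(X, Y) \<in> hasse_edges (order_ideals le P) (\<subseteq>)"
  shows "X \<in> order_ideals le P" "Y \<in> order_ideals le P" "card (sym_diff X Y) = 1"
proof -
  have cover: "A \<in> order_ideals le P \<and> B \<in> order_ideals le P \<and> sym_diff A B = B - A \<and> card (B - A) = 1"
    if "covers (order_ideals le P) (\<subseteq>) A B" for A B
  proof -
    have "A \<in> order_ideals le P" "B \<in> order_ideals le P" "A \<subseteq> B"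
      using that unfolding covers_def by simp_all
    then show ?thesis using covers_order_ideals_Diff[OF that] by auto
  qed
  have "covers (order_ideals le P) (\<subseteq>) X Y \<or> covers (order_ideals le P) (\<subseteq>) Y X"
    using assms unfolding hasse_edges_def by simp
  then show "X \<in> order_ideals le P" "Y \<in> order_ideals le P" "card (sym_diff X Y) = 1"
    using cover[of X Y] cover[of Y X] by (auto simp: sup_commute)
qed

context
  assumes finite_P: "finite P"
begin

lemma finite_order_ideal: "I \<in> order_ideals le P \<Longrightarrow> finite I"
  using finite_subset[OF order_ideals_subset finite_P] .

lemma card_sym_diff_le_walk:
  "(I, J) \<in> hasse_edges (order_ideals le P) (\<subseteq>) ^^ n \<Longrightarrow> I \<in> order_ideals le P
    \<Longrightarrow> card (sym_diff I J) \<le> n"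
proof (induction n arbitrary: J)
  case 0
  then show ?case by simp
next
  case (Suc n)
  from Suc.prems(1) obtain Z where walk: "(I, Z) \<in> hasse_edges (order_ideals le P) (\<subseteq>) ^^ n"
    and edge: "(Z, J) \<in> hasse_edges (order_ideals le P) (\<subseteq>)"
    by (rule relpow_Suc_E)
  note Z = hasse_edge_order_ideals[OF edge]
  have "sym_diff I J \<subseteq> sym_diff I Z \<union> sym_diff Z J" by auto
  moreover have "finite (sym_diff I Z \<union> sym_diff Z J)"
    using finite_order_ideal[OF Suc.prems(2)] finite_order_ideal[OF Z(1)] finite_order_ideal[OF Z(2)]
    by simp
  ultimately have "card (sym_diff I J) \<le> card (sym_diff I Z \<union> sym_diff Z J)"
    by (rule card_mono[rotated])
  also have "\<dots> \<le> card (sym_diff I Z) + card (sym_diff Z J)"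
    by (rule card_Un_le)
  also have "\<dots> \<le> Suc n" using Suc.IH[OF walk Suc.prems(2)] Z(3) by simp
  finally show ?case .
qed

lemma walk_of_card_sym_diff:
  "I \<in> order_ideals le P \<Longrightarrow> J \<in> order_ideals le P \<Longrightarrow> card (sym_diff I J) = d
    \<Longrightarrow> (I, J) \<in> hasse_edges (order_ideals le P) (\<subseteq>) ^^ d"
proof (induction d arbitrary: I)
  case 0
  then show ?case using finite_order_ideal by auto
next
  case (Suc d)
  note I = Suc.prems(1) and J = Suc.prems(2)
  have fin: "finite (sym_diff I J)" using finite_order_ideal I J by auto
  \<comment> \<open>Move one step towards J: add a lowest element of J - I, or else remove a highest one of I - J.\<close>
  obtain I' z where I': "I' \<in> order_ideals le P" and edge: "(I, I') \<in> hasse_edges (order_ideals le P) (\<subseteq>)"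
    and z: "z \<in> sym_diff I J" and sd: "sym_diff I' J = sym_diff I J - {z}"
  proof (cases "J - I = {}")
    case False
    then obtain z where z: "z \<in> J - I" and minimal: "\<forall>y\<in>J - I. rank z \<le> rank y"
      using ex_has_least_nat[of "\<lambda>z. z \<in> J - I" _ rank] by blast
    have I': "insert z I \<in> order_ideals le P"
      by (rule insert_rank_minimal_order_ideal[OF I J z minimal])
    have "covers (order_ideals le P) (\<subseteq>) I (insert z I)"
      unfolding covers_def using I I' z by auto
    then show thesis
      using that[OF I', of z] z unfolding hasse_edges_def by auto
  next
    case True
    then have "I - J \<noteq> {}" using Suc.prems(3) by auto
    moreover have "finite (I - J)" using finite_order_ideal I by auto
    ultimately obtain z where z: "z \<in> I - J" and maximal: "\<forall>y\<in>I - J. rank y \<le> rank z"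
      using Max_in[of "rank ` (I - J)"] Max_ge[of "rank ` (I - J)"] by fastforce
    have I': "I - {z} \<in> order_ideals le P"
      by (rule remove_rank_maximal_order_ideal[OF I J z maximal])
    have "covers (order_ideals le P) (\<subseteq>) (I - {z}) I"
      unfolding covers_def using I I' z by auto
    then show thesis
      using that[OF I', of z] z unfolding hasse_edges_def by auto
  qed
  have "card (sym_diff I' J) = d" using sd z fin Suc.prems(3) by simp
  then have "(I', J) \<in> hasse_edges (order_ideals le P) (\<subseteq>) ^^ d" using Suc.IH[OF I' J] by simp
  then show ?case by (rule relpow_Suc_I2[OF edge])
qed

lemma hasse_dist_order_ideals:
  assumes "I \<in> order_ideals le P" "J \<in> order_ideals le P"
  shows "hasse_dist (order_ideals le P) (\<subseteq>) I J = card (sym_diff I J)"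
  unfolding hasse_dist_def
proof (rule Least_equality)
  show "(I, J) \<in> hasse_edges (order_ideals le P) (\<subseteq>) ^^ card (sym_diff I J)"
    using walk_of_card_sym_diff[OF assms refl] .
qed (use card_sym_diff_le_walk assms(1) in blast)

end

end

section \<open>Lattice paths\<close>

definition subsets_of_size :: "nat \<Rightarrow> nat \<Rightarrow> nat set set" where
  "subsets_of_size n a = {U. U \<subseteq> {1..n} \<and> card U = a}"

definition count_upto :: "nat set \<Rightarrow> nat \<Rightarrow> nat" where
  "count_upto U t = card {x\<in>U. x \<le> t}"

lemma prod_le_rank_less: "prod_le y x \<Longrightarrow> y \<noteq> x \<Longrightarrow> fst y + snd y < fst x + snd x"
  unfolding prod_le_def by (cases x; cases y) auto

lemma finite_grid: "finite (chain m \<times> chain k)"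
  unfolding chain_def by simp

lemma hasse_dist_P_mk:
  assumes "I \<in> P_mk m k" "J \<in> P_mk m k"
  shows "hasse_dist (P_mk m k) (\<subseteq>) I J = card (sym_diff I J)"
  using assms unfolding P_mk_def
  by (intro hasse_dist_order_ideals[where rank = "\<lambda>z. fst z + snd z"] prod_le_rank_less finite_grid)

lemma P_mk_subset: "I \<in> P_mk m k \<Longrightarrow> I \<subseteq> {1..m} \<times> {1..k}"
  unfolding P_mk_def chain_def by (rule order_ideals_subset)

lemma P_mk_downward:
  "I \<in> P_mk m k \<Longrightarrow> (i, b) \<in> I \<Longrightarrow> 1 \<le> i' \<Longrightarrow> i' \<le> i \<Longrightarrow> 1 \<le> b' \<Longrightarrow> b' \<le> b \<Longrightarrow> (i', b') \<in> I"
proof -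
  assume "I \<in> P_mk m k" "(i, b) \<in> I" "1 \<le> i'" "i' \<le> i" "1 \<le> b'" "b' \<le> b"
  moreover from this have "(i', b') \<in> chain m \<times> chain k"
    using P_mk_subset by (fastforce simp: chain_def)
  ultimately show "(i', b') \<in> I"
    unfolding P_mk_def by (auto intro: order_ideals_downward simp: prod_le_def)
qed

definition row_length :: "(nat \<times> nat) set \<Rightarrow> nat \<Rightarrow> nat" where
  "row_length I i = card {b. (i, b) \<in> I}"

lemma down_closed_eq_atLeastAtMost:
  assumes "finite R" and "\<forall>b\<in>R. 1 \<le> b" and "\<forall>b\<in>R. \<forall>b'. 1 \<le> b' \<and> b' \<le> b \<longrightarrow> b' \<in> R"
  shows "R = {1..card R}"
proof (cases "R = {}")
  case False
  have "Max R \<in> R" using False assms(1) by simp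
  then have "R = {1..Max R}"
  proof (intro equalityI subsetI)
    fix b assume "b \<in> R"
    then show "b \<in> {1..Max R}" using assms(1,2) by simp
  next
    fix b assume "b \<in> {1..Max R}"
    then show "b \<in> R" using assms(3) \<open>Max R \<in> R\<close> by simp
  qed
  moreover from this have "card R = Max R" by (metis card_atLeastAtMost diff_Suc_1)
  ultimately show ?thesis by simp
qed simp

lemma row_P_mk:
  assumes I: "I \<in> P_mk m k" and i: "i \<in> {1..m}"
  shows "{b. (i, b) \<in> I} = {1..row_length I i}" and "row_length I i \<le> k"
proof -
  have row: "{b. (i, b) \<in> I} \<subseteq> {1..k}" using P_mk_subset[OF I] by auto
  then show "{b. (i, b) \<in> I} = {1..row_length I i}"
    unfolding row_length_def using P_mk_downward[OF I, of i _ i] i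
    by (intro down_closed_eq_atLeastAtMost) (auto intro: finite_subset)
  show "row_length I i \<le> k"
    unfolding row_length_def using card_mono[OF _ row] by simp
qed

lemma mem_P_mk_iff:
  assumes "I \<in> P_mk m k"
  shows "(i, b) \<in> I \<longleftrightarrow> i \<in> {1..m} \<and> 1 \<le> b \<and> b \<le> row_length I i"
proof (cases "i \<in> {1..m}")
  case True
  then show ?thesis using row_P_mk(1)[OF assms True] by (simp add: set_eq_iff)
qed (use P_mk_subset[OF assms] in auto)

lemma row_length_antimono:
  assumes I: "I \<in> P_mk m k" and "1 \<le> i" "i \<le> i'" "i' \<le> m"
  shows "row_length I i' \<le> row_length I i"
proof -
  have "{b. (i', b) \<in> I} \<subseteq> {b. (i, b) \<in> I}"
  proof
    fix b assume "b \<in> {b. (i', b) \<in> I}"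
    then show "b \<in> {b. (i, b) \<in> I}"
      using P_mk_downward[OF I, of i' b i b] mem_P_mk_iff[OF I, of i' b] assms by simp
  qed
  moreover have "finite {b. (i, b) \<in> I}" using row_P_mk(1)[OF I, of i] assms by simp
  ultimately show ?thesis unfolding row_length_def by (rule card_mono[rotated])
qed

lemma card_sym_diff_P_mk:
  assumes I: "I \<in> P_mk m k" and J: "J \<in> P_mk m k"
  shows "real (card (sym_diff I J)) = (\<Sum>i\<in>{1..m}. \<bar>real (row_length I i) - real (row_length J i)\<bar>)"
proof -
  have "sym_diff I J = (SIGMA i:{1..m}. sym_diff {1..row_length I i} {1..row_length J i})"
    using P_mk_subset[OF I] P_mk_subset[OF J] row_P_mk(1)[OF I] row_P_mk(1)[OF J] by blast
  then have "card (sym_diff I J) = (\<Sum>i\<in>{1..m}. card (sym_diff {1..row_length I i} {1..row_length J i}))"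
    by (simp add: card_SigmaI)
  moreover have "real (card (sym_diff {1..x} {1..y})) = \<bar>real x - real y\<bar>" for x y :: nat
  proof (cases "x \<le> y")
    case True
    then have "sym_diff {1..x} {1..y} = {x+1..y}" by auto
    then show ?thesis using True by simp
  next
    case False
    then have "sym_diff {1..x} {1..y} = {y+1..x}" by auto
    then show ?thesis using False by simp
  qed
  ultimately show ?thesis by simp
qed

\<comment> \<open>The boundary of I is a lattice path with m up-steps among m + k steps;
  path_code m I i is the position of the up-step that ends row i.\<close>
definition path_code :: "nat \<Rightarrow> (nat \<times> nat) set \<Rightarrow> nat \<Rightarrow> nat" where
  "path_code m I i = row_length I i + (m + 1 - i)"

definition path_set :: "nat \<Rightarrow> (nat \<times> nat) set \<Rightarrow> nat set" where
  "path_set m I = path_code m I ` {1..m}"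

lemma path_code_gap:
  assumes "I \<in> P_mk m k" and "1 \<le> i" "i \<le> i'" "i' \<le> m"
  shows "path_code m I i' + (i' - i) \<le> path_code m I i"
  using row_length_antimono[OF assms] assms unfolding path_code_def by simp

lemma path_code_range:
  assumes "I \<in> P_mk m k" and "i \<in> {1..m}"
  shows "path_code m I i \<in> {1..m + k}"
  using row_P_mk(2)[OF assms] assms(2) unfolding path_code_def by auto

lemma inj_on_path_code:
  assumes "I \<in> P_mk m k"
  shows "inj_on (path_code m I) {1..m}"
proof (rule linorder_inj_onI)
  fix i i' assume "i < i'" "i \<in> {1..m}" "i' \<in> {1..m}"
  then show "path_code m I i \<noteq> path_code m I i'"
    using path_code_gap[OF assms, of i i'] by auto
qed auto

lemma path_set_in_subsets:
  assumes "I \<in> P_mk m k"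
  shows "path_set m I \<in> subsets_of_size (m + k) m"
  using path_code_range[OF assms] card_image[OF inj_on_path_code[OF assms]]
  unfolding subsets_of_size_def path_set_def by auto

lemma count_upto_path_set:
  assumes "I \<in> P_mk m k"
  shows "count_upto (path_set m I) t = card {i\<in>{1..m}. path_code m I i \<le> t}"
proof -
  have "{x \<in> path_set m I. x \<le> t} = path_code m I ` {i\<in>{1..m}. path_code m I i \<le> t}"
    unfolding path_set_def by auto
  moreover have "inj_on (path_code m I) {i\<in>{1..m}. path_code m I i \<le> t}"
    using inj_on_path_code[OF assms] by (rule inj_on_subset) auto
  ultimately show ?thesis unfolding count_upto_def by (simp add: card_image)
qed

lemma abs_diff_eq_sum_indicator:
  fixes u v n :: nat
  assumes "u \<le> n" "v \<le> n"
  shows "\<bar>real u - real v\<bar> = (\<Sum>t\<le>n. \<bar>of_bool (u \<le> t) - of_bool (v \<le> t)\<bar>)"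
proof -
  have "(\<Sum>t\<le>n. \<bar>of_bool (u \<le> t) - of_bool (v \<le> t) :: real\<bar>) = (\<Sum>t\<le>n. of_bool (t \<in> {min u v..<max u v}))"
    by (intro sum.cong refl) auto
  also have "\<dots> = real (card ({..n} \<inter> {min u v..<max u v}))"
    by (simp add: Int_def)
  also have "{..n} \<inter> {min u v..<max u v} = {min u v..<max u v}" using assms by auto
  finally show ?thesis by (simp add: max_def min_def)
qed

lemma sum_abs_diff_indicator_nested:
  assumes "finite S" "A \<subseteq> S" "B \<subseteq> S" "A \<subseteq> B \<or> B \<subseteq> A"
  shows "(\<Sum>i\<in>S. \<bar>of_bool (i \<in> A) - of_bool (i \<in> B)\<bar>) = \<bar>real (card A) - real (card B)\<bar>"
proof -
  have "(\<Sum>i\<in>S. \<bar>of_bool (i \<in> A) - of_bool (i \<in> B) :: real\<bar>) = (\<Sum>i\<in>S. of_bool (i \<in> sym_diff A B))"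
    by (intro sum.cong refl) auto
  also have "\<dots> = real (card (S \<inter> {i. i \<in> sym_diff A B}))"
    using assms(1) by (simp only: sum_of_bool_eq)
  also have "S \<inter> {i. i \<in> sym_diff A B} = sym_diff A B"
    using assms(2,3) by auto
  also have "real (card (sym_diff A B)) = \<bar>real (card A) - real (card B)\<bar>"
    using assms(4)
  proof
    assume "A \<subseteq> B"
    then have "sym_diff A B = B - A" "card A \<le> card B"
      using finite_subset[OF assms(3,1)] by (auto intro: card_mono)
    then show ?thesis using \<open>A \<subseteq> B\<close> finite_subset[OF assms(2,1)] by (simp add: card_Diff_subset)
  next
    assume "B \<subseteq> A"
    then have "sym_diff A B = A - B" "card B \<le> card A"
      using finite_subset[OF assms(2,1)] by (auto intro: card_mono)
    then show ?thesis using \<open>B \<subseteq> A\<close> finite_subset[OF assms(3,1)] by (simp add: card_Diff_subset)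
  qed
  finally show ?thesis .
qed

lemma up_closed_subsets_comparable:
  fixes A B :: "'a::linorder set"
  assumes "\<And>i i'. i \<in> A \<Longrightarrow> i \<le> i' \<Longrightarrow> i' \<in> S \<Longrightarrow> i' \<in> A"
    and "\<And>i i'. i \<in> B \<Longrightarrow> i \<le> i' \<Longrightarrow> i' \<in> S \<Longrightarrow> i' \<in> B"
    and "A \<subseteq> S" "B \<subseteq> S"
  shows "A \<subseteq> B \<or> B \<subseteq> A"
  using assms by (metis linorder_le_cases subset_iff)

lemma card_sym_diff_eq_count_upto:
  assumes I: "I \<in> P_mk m k" and J: "J \<in> P_mk m k"
  shows "real (card (sym_diff I J))
     = (\<Sum>t\<le>m + k. \<bar>real (count_upto (path_set m I) t) - real (count_upto (path_set m J) t)\<bar>)"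
proof -
  let ?below = "\<lambda>I t. {i\<in>{1..m}. path_code m I i \<le> t}"
  have "real (card (sym_diff I J)) = (\<Sum>i\<in>{1..m}. \<bar>real (path_code m I i) - real (path_code m J i)\<bar>)"
    unfolding card_sym_diff_P_mk[OF I J] by (intro sum.cong refl) (auto simp: path_code_def)
  also have "\<dots> = (\<Sum>i\<in>{1..m}. \<Sum>t\<le>m + k. \<bar>of_bool (i \<in> ?below I t) - of_bool (i \<in> ?below J t)\<bar>)"
  proof (intro sum.cong refl)
    fix i assume i: "i \<in> {1..m}"
    then have "path_code m I i \<le> m + k" "path_code m J i \<le> m + k"
      using path_code_range[OF I i] path_code_range[OF J i] by auto
    then show "\<bar>real (path_code m I i) - real (path_code m J i)\<bar>
        = (\<Sum>t\<le>m + k. \<bar>of_bool (i \<in> ?below I t) - of_bool (i \<in> ?below J t)\<bar>)"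
      using i by (simp add: abs_diff_eq_sum_indicator)
  qed
  also have "\<dots> = (\<Sum>t\<le>m + k. \<Sum>i\<in>{1..m}. \<bar>of_bool (i \<in> ?below I t) - of_bool (i \<in> ?below J t)\<bar>)"
    by (rule sum.swap)
  also have "\<dots> = (\<Sum>t\<le>m + k. \<bar>real (card (?below I t)) - real (card (?below J t))\<bar>)"
  proof (intro sum.cong refl sum_abs_diff_indicator_nested)
    fix t
    have "i' \<in> ?below K t" if "K \<in> P_mk m k" "i \<in> ?below K t" "i \<le> i'" "i' \<in> {1..m}" for K i i'
      using that path_code_gap[OF that(1), of i i'] by auto
    then show "?below I t \<subseteq> ?below J t \<or> ?below J t \<subseteq> ?below I t"
      using I J by (intro up_closed_subsets_comparable[of _ "{1..m}"]) blast+
  qed auto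
  finally show ?thesis by (simp only: count_upto_path_set[OF I] count_upto_path_set[OF J])
qed

lemma image_reflect_atLeastLessThan: "(\<lambda>j. m - j) ` {0..<m} = {1..m::nat}"
proof
  show "{1..m} \<subseteq> (\<lambda>j. m - j) ` {0..<m}"
  proof
    fix i assume "i \<in> {1..m}"
    then show "i \<in> (\<lambda>j. m - j) ` {0..<m}" by (intro image_eqI[of _ _ "m - i"]) auto
  qed
qed auto

definition ideal_of_path :: "nat \<Rightarrow> nat \<Rightarrow> nat set \<Rightarrow> (nat \<times> nat) set" where
  "ideal_of_path m k U =
     {(i, b). i \<in> {1..m} \<and> b \<in> {1..k} \<and> b + (m + 1 - i) \<le> sorted_list_of_set U ! (m - i)}"

lemma sorted_list_of_path_set:
  assumes I: "I \<in> P_mk m k"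
  shows "sorted_list_of_set (path_set m I) = map (\<lambda>j. path_code m I (m - j)) [0..<m]"
    (is "_ = ?L")
proof -
  have "sorted_wrt (<) ?L"
    unfolding sorted_wrt_iff_nth_less
  proof (intro allI impI)
    fix j j' assume "j < j'" "j' < length ?L"
    then have "1 \<le> m - j'" "m - j' \<le> m - j" "m - j \<le> m" "(m - j) - (m - j') = j' - j"
      by auto
    with path_code_gap[OF I this(1-3)] \<open>j < j'\<close> \<open>j' < length ?L\<close>
    show "?L ! j < ?L ! j'" by simp
  qed
  moreover have "set ?L = path_set m I"
    unfolding path_set_def image_reflect_atLeastLessThan[symmetric] by (simp add: image_image)
  moreover have "length ?L = card (path_set m I)"
    using path_set_in_subsets[OF I] unfolding subsets_of_size_def by simp
  ultimately show ?thesis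
    using sorted_list_of_set_unique[of "path_set m I" ?L] by (auto simp: path_set_def)
qed

lemma ideal_of_path_path_set:
  assumes I: "I \<in> P_mk m k"
  shows "ideal_of_path m k (path_set m I) = I"
proof -
  have "(i, b) \<in> ideal_of_path m k (path_set m I) \<longleftrightarrow> (i, b) \<in> I" for i b
  proof (cases "i \<in> {1..m}")
    case True
    then have "sorted_list_of_set (path_set m I) ! (m - i) = row_length I i + (m + 1 - i)"
      unfolding sorted_list_of_path_set[OF I] path_code_def by auto
    then show ?thesis
      using True row_P_mk(2)[OF I True] mem_P_mk_iff[OF I] unfolding ideal_of_path_def by auto
  qed (use mem_P_mk_iff[OF I] in \<open>auto simp: ideal_of_path_def\<close>)
  then show ?thesis by auto
qed

lemma sorted_wrt_less_nth_gap:
  fixes xs :: "nat list"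
  assumes "sorted_wrt (<) xs" "j + d < length xs"
  shows "xs ! j + d \<le> xs ! (j + d)"
  using assms(2)
proof (induction d)
  case (Suc d)
  then have "xs ! (j + d) < xs ! (j + Suc d)"
    using sorted_wrt_nth_less[OF assms(1), of "j + d" "j + Suc d"] by simp
  with Suc show ?case by simp
qed simp

context
  fixes m k :: nat and U :: "nat set"
  assumes U: "U \<in> subsets_of_size (m + k) m"
begin

lemma sorted_list_of_subset:
  shows "length (sorted_list_of_set U) = m" and "set (sorted_list_of_set U) = U"
    and "sorted_wrt (<) (sorted_list_of_set U)" and "U \<subseteq> {1..m + k}"
proof -
  have "finite U" "card U = m" "U \<subseteq> {1..m + k}"
    using U finite_subset unfolding subsets_of_size_def by auto
  then show "length (sorted_list_of_set U) = m" "set (sorted_list_of_set U) = U"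
    "sorted_wrt (<) (sorted_list_of_set U)" "U \<subseteq> {1..m + k}"
    by (simp_all add: strict_sorted_list_of_set)
qed

lemma sorted_list_of_subset_bounds:
  assumes "j < m"
  shows "j + 1 \<le> sorted_list_of_set U ! j" and "sorted_list_of_set U ! j + (m - 1 - j) \<le> m + k"
proof -
  note props = sorted_list_of_subset
  have mem: "sorted_list_of_set U ! j' \<in> {1..m + k}" if "j' < m" for j'
    using props(1,2,4) nth_mem that by blast
  show "j + 1 \<le> sorted_list_of_set U ! j"
    using sorted_wrt_less_nth_gap[OF props(3), of 0 j] mem[of 0] assms props(1) by auto
  show "sorted_list_of_set U ! j + (m - 1 - j) \<le> m + k"
    using sorted_wrt_less_nth_gap[OF props(3), of j "m - 1 - j"] mem[of "m - 1"] assms props(1) by auto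
qed

lemma path_code_ideal_of_path:
  assumes i: "i \<in> {1..m}"
  shows "path_code m (ideal_of_path m k U) i = sorted_list_of_set U ! (m - i)"
proof -
  have "sorted_list_of_set U ! (m - i) - (m + 1 - i) \<le> k"
    using sorted_list_of_subset_bounds(2)[of "m - i"] i by auto
  then have "{b. (i, b) \<in> ideal_of_path m k U} = {1..sorted_list_of_set U ! (m - i) - (m + 1 - i)}"
    using i unfolding ideal_of_path_def by auto
  then show ?thesis
    using sorted_list_of_subset_bounds(1)[of "m - i"] i unfolding path_code_def row_length_def by auto
qed

lemma ideal_of_path_in_P_mk: "ideal_of_path m k U \<in> P_mk m k"
  unfolding P_mk_def order_ideals_def
proof (intro CollectI conjI ballI impI)
  show "ideal_of_path m k U \<subseteq> chain m \<times> chain k"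
    unfolding ideal_of_path_def chain_def by auto
next
  fix x y assume x: "x \<in> ideal_of_path m k U" and y: "y \<in> chain m \<times> chain k" and "prod_le y x"
  obtain i b i' b' where xy: "x = (i, b)" "y = (i', b')" by fastforce
  have i: "i \<in> {1..m}" "b + (m + 1 - i) \<le> sorted_list_of_set U ! (m - i)"
    using x unfolding xy ideal_of_path_def by auto
  have i': "i' \<in> {1..m}" "b' \<in> {1..k}" "i' \<le> i" "b' \<le> b"
    using y \<open>prod_le y x\<close> unfolding xy chain_def prod_le_def by auto
  have "sorted_list_of_set U ! (m - i) + (i - i') \<le> sorted_list_of_set U ! (m - i')"
    using sorted_wrt_less_nth_gap[OF sorted_list_of_subset(3), of "m - i" "i - i'"]
      sorted_list_of_subset(1) i i' by auto
  then show "y \<in> ideal_of_path m k U"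
    using i i' unfolding xy ideal_of_path_def by auto
qed

lemma path_set_ideal_of_path: "path_set m (ideal_of_path m k U) = U"
proof -
  have "path_set m (ideal_of_path m k U) = (\<lambda>i. sorted_list_of_set U ! (m - i)) ` {1..m}"
    unfolding path_set_def using path_code_ideal_of_path by simp
  also have "\<dots> = (\<lambda>j. sorted_list_of_set U ! j) ` {0..<m}"
    unfolding image_reflect_atLeastLessThan[symmetric] image_image by (intro image_cong) auto
  also have "\<dots> = set (sorted_list_of_set U)"
    using sorted_list_of_subset(1) by (auto simp: set_conv_nth)
  also have "\<dots> = U"
    by (rule sorted_list_of_subset(2))
  finally show ?thesis .
qed

end

lemma bij_betw_path_set: "bij_betw (path_set m) (P_mk m k) (subsets_of_size (m + k) m)"
  by (rule bij_betw_byWitness[where f' = "ideal_of_path m k"])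
     (auto simp: ideal_of_path_path_set path_set_ideal_of_path path_set_in_subsets ideal_of_path_in_P_mk)

definition pair_sum :: "(nat \<Rightarrow> nat \<Rightarrow> real) \<Rightarrow> nat \<Rightarrow> nat \<Rightarrow> nat \<Rightarrow> real" where
  "pair_sum g n a b =
     (\<Sum>U\<in>subsets_of_size n a. \<Sum>V\<in>subsets_of_size n b. \<Sum>t\<le>n. g (count_upto U t) (count_upto V t))"

lemma sum_card_sym_diff_P_mk:
  "(\<Sum>I\<in>P_mk m k. \<Sum>J\<in>P_mk m k. real (card (sym_diff I J)))
     = pair_sum (\<lambda>x y. \<bar>real x - real y\<bar>) (m + k) m m"
proof -
  let ?d = "\<lambda>U V. \<Sum>t\<le>m + k. \<bar>real (count_upto U t) - real (count_upto V t)\<bar>"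
  have "(\<Sum>I\<in>P_mk m k. \<Sum>J\<in>P_mk m k. real (card (sym_diff I J)))
      = (\<Sum>I\<in>P_mk m k. \<Sum>J\<in>P_mk m k. ?d (path_set m I) (path_set m J))"
    by (intro sum.cong refl card_sym_diff_eq_count_upto)
  also have "\<dots> = (\<Sum>U\<in>subsets_of_size (m + k) m. \<Sum>V\<in>subsets_of_size (m + k) m. ?d U V)"
    using sum.reindex_bij_betw[OF bij_betw_path_set, of "\<lambda>U. \<Sum>V\<in>subsets_of_size (m + k) m. ?d U V"]
      sum.reindex_bij_betw[OF bij_betw_path_set, of "?d (path_set m _)"]
    by simp
  finally show ?thesis unfolding pair_sum_def .
qed

section \<open>Sums over pairs of subsets\<close>

lemma finite_subsets_of_size[simp]: "finite (subsets_of_size n a)"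
  unfolding subsets_of_size_def by (rule finite_subset[of _ "Pow {1..n}"]) auto

lemma card_subsets_of_size: "card (subsets_of_size n a) = n choose a"
  unfolding subsets_of_size_def using n_subsets[of "{1..n}" a] by simp

lemma subsets_of_size_0: "subsets_of_size 0 a = (if a = 0 then {{}} else {})"
  unfolding subsets_of_size_def by auto

lemma subsets_of_size_Suc_containing_top:
  assumes "a \<noteq> 0"
  shows "{U\<in>subsets_of_size (Suc n) a. Suc n \<in> U} = insert (Suc n) ` subsets_of_size n (a - 1)"
proof
  show "{U\<in>subsets_of_size (Suc n) a. Suc n \<in> U} \<subseteq> insert (Suc n) ` subsets_of_size n (a - 1)"
  proof
    fix U assume "U \<in> {U\<in>subsets_of_size (Suc n) a. Suc n \<in> U}"
    then have U: "U \<subseteq> {1..Suc n}" "card U = a" "Suc n \<in> U" "finite U"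
      unfolding subsets_of_size_def by (auto intro: finite_subset)
    then have "U - {Suc n} \<in> subsets_of_size n (a - 1)"
      unfolding subsets_of_size_def by (auto simp: atLeastAtMostSuc_conv)
    moreover have "U = insert (Suc n) (U - {Suc n})" using U by auto
    ultimately show "U \<in> insert (Suc n) ` subsets_of_size n (a - 1)" by blast
  qed
next
  show "insert (Suc n) ` subsets_of_size n (a - 1) \<subseteq> {U\<in>subsets_of_size (Suc n) a. Suc n \<in> U}"
  proof
    fix U assume "U \<in> insert (Suc n) ` subsets_of_size n (a - 1)"
    then obtain W where W: "W \<subseteq> {1..n}" "card W = a - 1" "U = insert (Suc n) W"
      unfolding subsets_of_size_def by blast
    then have "Suc n \<notin> W" "finite W" by (auto intro: finite_subset)
    then show "U \<in> {U\<in>subsets_of_size (Suc n) a. Suc n \<in> U}"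
      using W assms unfolding subsets_of_size_def by auto
  qed
qed

lemma sum_subsets_of_size_Suc:
  "(\<Sum>U\<in>subsets_of_size (Suc n) a. h U) = (\<Sum>U\<in>subsets_of_size n a. h U) +
     (if a = 0 then 0 else (\<Sum>U\<in>subsets_of_size n (a - 1). h (insert (Suc n) U)))"
proof -
  let ?top = "{U\<in>subsets_of_size (Suc n) a. Suc n \<in> U}"
  have split: "subsets_of_size (Suc n) a = subsets_of_size n a \<union> ?top"
    and disjoint: "subsets_of_size n a \<inter> ?top = {}"
    unfolding subsets_of_size_def by (auto simp: atLeastAtMostSuc_conv)
  have "(\<Sum>U\<in>subsets_of_size (Suc n) a. h U) = (\<Sum>U\<in>subsets_of_size n a. h U) + (\<Sum>U\<in>?top. h U)"
    by (subst split, rule sum.union_disjoint) (use disjoint in auto)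
  moreover have "(\<Sum>U\<in>?top. h U) = (\<Sum>U\<in>subsets_of_size n (a - 1). h (insert (Suc n) U))" if "a \<noteq> 0"
  proof -
    have "inj_on (insert (Suc n)) (subsets_of_size n (a - 1))"
      unfolding inj_on_def subsets_of_size_def by (metis Diff_insert_absorb atLeastAtMost_iff
        mem_Collect_eq not_less_eq_eq order_refl subsetD)
    then show ?thesis by (simp add: subsets_of_size_Suc_containing_top[OF that] sum.reindex)
  qed
  moreover have "(\<Sum>U\<in>?top. h U) = 0" if "a = 0"
  proof -
    have "?top = {}"
      using that unfolding subsets_of_size_def
      by auto (metis card_0_eq finite_atLeastAtMost finite_subset empty_iff)
    then show ?thesis by (simp only: sum.empty)
  qed
  ultimately show ?thesis by (cases "a = 0") simp_all
qed

lemma count_upto_insert: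
  "U \<subseteq> {1..n} \<Longrightarrow> t \<le> n \<Longrightarrow> count_upto (insert (Suc n) U) t = count_upto U t"
  unfolding count_upto_def by (rule arg_cong[where f=card]) auto

lemma count_upto_top: "U \<subseteq> {1..n} \<Longrightarrow> count_upto U n = card U"
  unfolding count_upto_def by (rule arg_cong[where f=card]) auto

lemma pair_sum_0: "pair_sum g 0 a b = (if a = 0 \<and> b = 0 then g 0 0 else 0)"
  unfolding pair_sum_def subsets_of_size_0 by (simp add: count_upto_def)

lemma pair_sum_Suc:
  "pair_sum g (Suc n) a b = pair_sum g n a b + (if a = 0 then 0 else pair_sum g n (a-1) b)
     + (if b = 0 then 0 else pair_sum g n a (b-1)) + (if a = 0 \<or> b = 0 then 0 else pair_sum g n (a-1) (b-1))
     + g a b * real (Suc n choose a) * real (Suc n choose b)"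
proof -
  define h where "h U V = (\<Sum>t\<le>n. g (count_upto U t) (count_upto V t))" for U V
  have split: "(\<Sum>t\<le>Suc n. g (count_upto U t) (count_upto V t)) = h U V + g a b"
    if "U \<in> subsets_of_size (Suc n) a" "V \<in> subsets_of_size (Suc n) b" for U V
    using that unfolding h_def subsets_of_size_def by (simp add: count_upto_top)
  have hU: "h (insert (Suc n) U) V = h U V" if "U \<in> subsets_of_size n c" for U V c
    using that unfolding h_def subsets_of_size_def by (auto intro!: sum.cong simp: count_upto_insert)
  have hV: "h U (insert (Suc n) V) = h U V" if "V \<in> subsets_of_size n c" for U V c
    using that unfolding h_def subsets_of_size_def by (auto intro!: sum.cong simp: count_upto_insert)
  have "pair_sum g (Suc n) a b = (\<Sum>U\<in>subsets_of_size (Suc n) a. \<Sum>V\<in>subsets_of_size (Suc n) b. h U V + g a b)"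
    unfolding pair_sum_def by (intro sum.cong refl) (rule split)
  also have "\<dots> = (\<Sum>U\<in>subsets_of_size (Suc n) a. \<Sum>V\<in>subsets_of_size (Suc n) b. h U V)
      + g a b * real (Suc n choose a) * real (Suc n choose b)"
    by (simp add: sum.distrib card_subsets_of_size)
  also have "(\<Sum>U\<in>subsets_of_size (Suc n) a. \<Sum>V\<in>subsets_of_size (Suc n) b. h U V)
     = (\<Sum>U\<in>subsets_of_size (Suc n) a. (\<Sum>V\<in>subsets_of_size n b. h U V) + (if b = 0 then 0 else \<Sum>V\<in>subsets_of_size n (b-1). h U V))"
    by (intro sum.cong refl, subst sum_subsets_of_size_Suc) (auto intro!: sum.cong simp: hV)
  also have "\<dots> = (\<Sum>U\<in>subsets_of_size n a. (\<Sum>V\<in>subsets_of_size n b. h U V) + (if b = 0 then 0 else \<Sum>V\<in>subsets_of_size n (b-1). h U V))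
     + (if a = 0 then 0 else (\<Sum>U\<in>subsets_of_size n (a-1). (\<Sum>V\<in>subsets_of_size n b. h U V) + (if b = 0 then 0 else \<Sum>V\<in>subsets_of_size n (b-1). h U V)))"
    by (subst sum_subsets_of_size_Suc) (auto intro!: sum.cong simp: hU)
  also have "\<dots> = pair_sum g n a b + (if a=0 then 0 else pair_sum g n (a-1) b)
   + (if b = 0 then 0 else pair_sum g n a (b-1)) + (if a=0 \<or> b=0 then 0 else pair_sum g n (a-1) (b-1))"
    unfolding pair_sum_def h_def by (simp add: sum.distrib)
  finally show ?thesis by simp
qed

lemma of_nat_binomial_absorb_Suc:
  "real (Suc k) * real (n choose Suc k) = (real n - real k) * real (n choose k)"
proof (cases "k \<le> n")
  case True
  have "Suc k * (n choose Suc k) = (n - k) * (n choose k)"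
    using binomial_absorb_comp[of n k] binomial_absorption[of k n] by simp
  then have "real (Suc k * (n choose Suc k)) = real ((n - k) * (n choose k))" by (simp only:)
  then show ?thesis using True by (simp add: of_nat_diff algebra_simps)
next
  case False
  then show ?thesis by (simp add: binomial_eq_0)
qed

lemma pair_sum_diff_eq: "pair_sum (\<lambda>x y. real x - real y) n a b
   = (real a - real b) * (real n + 1) / 2 * real (n choose a) * real (n choose b)"
proof (induction n arbitrary: a b)
  case 0
  then show ?case by (simp add: pair_sum_0)
next
  case (Suc n)
  show ?case
  proof (cases a)
    case 0
    then show ?thesis
    proof (cases b)
      case 0
      then show ?thesis using \<open>a = 0\<close> by (simp add: pair_sum_Suc Suc.IH)
    next
      case (Suc b')
      have r: "real (Suc b') * real (n choose Suc b') = (real n - real b') * real (n choose b')"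
        by (rule of_nat_binomial_absorb_Suc)
      show ?thesis unfolding \<open>a = 0\<close> Suc using r by (simp add: pair_sum_Suc Suc.IH) algebra
    qed
  next
    case (Suc a')
    have ra: "real (Suc a') * real (n choose Suc a') = (real n - real a') * real (n choose a')"
      by (rule of_nat_binomial_absorb_Suc)
    show ?thesis
    proof (cases b)
      case 0
      show ?thesis unfolding \<open>a = Suc a'\<close> 0 using ra by (simp add: pair_sum_Suc Suc.IH) algebra
    next
      case (Suc b')
      have rb: "real (Suc b') * real (n choose Suc b') = (real n - real b') * real (n choose b')"
        by (rule of_nat_binomial_absorb_Suc)
      show ?thesis unfolding \<open>a = Suc a'\<close> Suc using ra rb by (simp add: pair_sum_Suc Suc.IH) algebra
    qed
  qed
qed

definition excess_sum :: "nat \<Rightarrow> nat \<Rightarrow> nat \<Rightarrow> real" where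
  "excess_sum n a b = pair_sum (\<lambda>x y. max 0 (real x - real y)) n a b"

lemma pair_sum_swap: "pair_sum g n b a = pair_sum (\<lambda>x y. g y x) n a b"
  unfolding pair_sum_def by (subst sum.swap) simp

lemma pair_sum_subtractf:
  "pair_sum (\<lambda>x y. g1 x y - g2 x y) n a b = pair_sum g1 n a b - pair_sum g2 n a b"
  unfolding pair_sum_def by (simp add: sum_subtractf)

lemma pair_sum_distrib:
  "pair_sum (\<lambda>x y. g1 x y + g2 x y) n a b = pair_sum g1 n a b + pair_sum g2 n a b"
  unfolding pair_sum_def by (simp add: sum.distrib)

lemma excess_sum_antisym:
  "excess_sum n a b - excess_sum n b a
     = (real a - real b) * (real n + 1) / 2 * real (n choose a) * real (n choose b)"
proof -
  have "excess_sum n a b - excess_sum n b a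
      = pair_sum (\<lambda>x y. max 0 (real x - real y) - max 0 (real y - real x)) n a b"
    unfolding excess_sum_def by (subst pair_sum_swap[of _ n b a]) (simp add: pair_sum_subtractf)
  also have "\<dots> = pair_sum (\<lambda>x y. real x - real y) n a b"
    unfolding pair_sum_def by (intro sum.cong refl) (simp add: max_def)
  finally show ?thesis by (simp add: pair_sum_diff_eq)
qed

lemma pair_sum_abs_eq_excess_sum:
  "pair_sum (\<lambda>x y. \<bar>real x - real y\<bar>) n a a = 2 * excess_sum n a a"
proof -
  have "pair_sum (\<lambda>x y. \<bar>real x - real y\<bar>) n a a
      = pair_sum (\<lambda>x y. max 0 (real x - real y) + max 0 (real y - real x)) n a a"
    unfolding pair_sum_def by (intro sum.cong refl) (simp add: max_def)
  also have "\<dots> = excess_sum n a a + pair_sum (\<lambda>x y. max 0 (real y - real x)) n a a"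
    unfolding excess_sum_def by (rule pair_sum_distrib)
  also have "pair_sum (\<lambda>x y. max 0 (real y - real x)) n a a = excess_sum n a a"
    unfolding excess_sum_def by (rule pair_sum_swap[symmetric])
  finally show ?thesis by simp
qed

definition binomial_int :: "int \<Rightarrow> int \<Rightarrow> real" where
  "binomial_int M j = (if 0 \<le> M \<and> 0 \<le> j then real (nat M choose nat j) else 0)"

lemma binomial_int_of_nat[simp]: "binomial_int (int n) (int a) = real (n choose a)"
  unfolding binomial_int_def by simp

lemma binomial_int_neg_right[simp]: "j < 0 \<Longrightarrow> binomial_int M j = 0"
  unfolding binomial_int_def by simp

lemma binomial_int_neg_left: "M < 0 \<Longrightarrow> binomial_int M j = 0"
  unfolding binomial_int_def by simp

definition diag_term :: "int \<Rightarrow> int \<Rightarrow> real" where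
  "diag_term n a = real_of_int n / 2 * binomial_int (n-1) a * binomial_int (n-1) (a-1)"

\<comment> \<open>For a < b the recursion of excess_sum is the Pascal recursion of the kernel
  C(n, a) C(n, b); on the diagonal antisymmetry adds the source diag_term (n + 1) a.
  Summing the kernel against the sources solves it.\<close>
definition conv_sum :: "nat \<Rightarrow> nat \<Rightarrow> nat \<Rightarrow> real" where
  "conv_sum n a b = (\<Sum>i\<le>n. \<Sum>j\<le>a.
     real ((n - i) choose (a - j)) * real ((n - i) choose (b - j)) * diag_term (int i) (int j))"

lemma diag_term_Suc:
  "diag_term (int (Suc n)) (int a)
     = (if a = 0 then 0 else (real n + 1) / 2 * real (n choose a) * real (n choose (a - 1)))"
proof (cases a)
  case 0 then show ?thesis by (simp add: diag_term_def)
next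
  case (Suc a')
  have "binomial_int (int (Suc n) - 1) (int a - 1) = real (n choose a')"
    using binomial_int_of_nat[of n a'] Suc by simp
  moreover have "binomial_int (int (Suc n) - 1) (int a) = real (n choose a)"
    using binomial_int_of_nat[of n a] by simp
  ultimately show ?thesis unfolding diag_term_def using Suc by (simp add: algebra_simps)
qed

lemma diag_term_0: "diag_term 0 a = 0" unfolding diag_term_def by simp

lemma of_nat_binomial_Suc_diff:
  "j < c \<Longrightarrow> real (Suc L choose (c - j)) = real (L choose (c - j)) + real (L choose (c - 1 - j))"
proof -
  assume "j < c"
  then have "c - j = Suc (c - 1 - j)" by simp
  then show ?thesis by simp
qed

lemma sum_binomial_products_Suc:
  assumes "a < b"
  shows "(\<Sum>j\<le>a. real (Suc L choose (a-j)) * real (Suc L choose (b-j)) * w j)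
   = (\<Sum>j\<le>a. real (L choose (a-j)) * real (L choose (b-j)) * w j)
   + (\<Sum>j\<le>a. real (L choose (a-j)) * real (L choose (b-1-j)) * w j)
   + (if a = 0 then 0 else (\<Sum>j\<le>a-1. real (L choose (a-1-j)) * real (L choose (b-j)) * w j)
        + (\<Sum>j\<le>a-1. real (L choose (a-1-j)) * real (L choose (b-1-j)) * w j))"
proof -
  have bj: "real (Suc L choose (b-j)) = real (L choose (b-j)) + real (L choose (b-1-j))" if "j \<le> a" for j
    using that assms by (intro of_nat_binomial_Suc_diff) simp
  show ?thesis
  proof (cases a)
    case 0
    then show ?thesis using bj[of 0] by (simp add: algebra_simps)
  next
    case (Suc a')
    have aj: "real (Suc L choose (a-j)) = real (L choose (a-j)) + real (L choose (a-1-j))" if "j \<le> a'" for j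
      using that Suc by (intro of_nat_binomial_Suc_diff) simp
    have "(\<Sum>j\<le>a. real (Suc L choose (a-j)) * real (Suc L choose (b-j)) * w j)
       = (\<Sum>j\<le>a'. real (Suc L choose (a-j)) * real (Suc L choose (b-j)) * w j)
         + real (Suc L choose (b-a)) * w a"
      using Suc by simp
    also have "(\<Sum>j\<le>a'. real (Suc L choose (a-j)) * real (Suc L choose (b-j)) * w j)
       = (\<Sum>j\<le>a'. real (L choose (a-j)) * real (L choose (b-j)) * w j
          + real (L choose (a-j)) * real (L choose (b-1-j)) * w j
          + real (L choose (a-1-j)) * real (L choose (b-j)) * w j
          + real (L choose (a-1-j)) * real (L choose (b-1-j)) * w j)"
    proof (intro sum.cong refl)
      fix j assume "j \<in> {..a'}"
      then have j1: "j \<le> a'" and j2: "j \<le> a" using Suc by auto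
      show "real (Suc L choose (a-j)) * real (Suc L choose (b-j)) * w j =
          real (L choose (a-j)) * real (L choose (b-j)) * w j
          + real (L choose (a-j)) * real (L choose (b-1-j)) * w j
          + real (L choose (a-1-j)) * real (L choose (b-j)) * w j
          + real (L choose (a-1-j)) * real (L choose (b-1-j)) * w j"
        unfolding aj[OF j1] bj[OF j2] by (simp add: algebra_simps)
    qed
    finally show ?thesis using Suc bj[of a]
      by (simp add: sum.distrib algebra_simps)
  qed
qed

lemma sum_binomial_squares_Suc:
  "(\<Sum>j\<le>a. real (Suc L choose (a-j)) * real (Suc L choose (a-j)) * w j)
   = (\<Sum>j\<le>a. real (L choose (a-j)) * real (L choose (a-j)) * w j)
   + (if a = 0 then 0 else 2 * (\<Sum>j\<le>a-1. real (L choose (a-1-j)) * real (L choose (a-j)) * w j)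
        + (\<Sum>j\<le>a-1. real (L choose (a-1-j)) * real (L choose (a-1-j)) * w j))"
proof (cases a)
  case 0
  then show ?thesis by simp
next
  case (Suc a')
  have aj: "real (Suc L choose (a-j)) = real (L choose (a-j)) + real (L choose (a-1-j))" if "j \<le> a'" for j
    using that Suc by (intro of_nat_binomial_Suc_diff) simp
  have "(\<Sum>j\<le>a. real (Suc L choose (a-j)) * real (Suc L choose (a-j)) * w j)
     = (\<Sum>j\<le>a'. real (Suc L choose (a-j)) * real (Suc L choose (a-j)) * w j) + w a"
    using Suc by simp
  also have "(\<Sum>j\<le>a'. real (Suc L choose (a-j)) * real (Suc L choose (a-j)) * w j)
     = (\<Sum>j\<le>a'. real (L choose (a-j)) * real (L choose (a-j)) * w j
          + 2 * (real (L choose (a-1-j)) * real (L choose (a-j)) * w j)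
          + real (L choose (a-1-j)) * real (L choose (a-1-j)) * w j)"
  proof (intro sum.cong refl)
    fix j assume "j \<in> {..a'}"
    then have j1: "j \<le> a'" by auto
    show "real (Suc L choose (a-j)) * real (Suc L choose (a-j)) * w j =
          real (L choose (a-j)) * real (L choose (a-j)) * w j
          + 2 * (real (L choose (a-1-j)) * real (L choose (a-j)) * w j)
          + real (L choose (a-1-j)) * real (L choose (a-1-j)) * w j"
      unfolding aj[OF j1] by (simp add: algebra_simps)
  qed
  finally show ?thesis using Suc
    by (simp add: sum.distrib sum_distrib_left algebra_simps)
qed

lemma conv_sum_Suc:
  assumes "a < b"
  shows "conv_sum (Suc n) a b = conv_sum n a b + conv_sum n a (b-1)
     + (if a = 0 then 0 else conv_sum n (a-1) b + conv_sum n (a-1) (b-1))"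
proof -
  have last: "(\<Sum>j\<le>a. real ((Suc n - Suc n) choose (a-j)) * real ((Suc n - Suc n) choose (b-j)) * diag_term (int (Suc n)) (int j)) = 0"
    using assms by (intro sum.neutral) auto
  have "conv_sum (Suc n) a b = (\<Sum>i\<le>n. \<Sum>j\<le>a. real (Suc (n-i) choose (a-j)) * real (Suc (n-i) choose (b-j)) * diag_term (int i) (int j))"
    unfolding conv_sum_def sum.atMost_Suc last by (simp add: Suc_diff_le)
  also have "\<dots> = (\<Sum>i\<le>n. (\<Sum>j\<le>a. real ((n-i) choose (a-j)) * real ((n-i) choose (b-j)) * diag_term (int i) (int j))
   + (\<Sum>j\<le>a. real ((n-i) choose (a-j)) * real ((n-i) choose (b-1-j)) * diag_term (int i) (int j))
   + (if a = 0 then 0 else (\<Sum>j\<le>a-1. real ((n-i) choose (a-1-j)) * real ((n-i) choose (b-j)) * diag_term (int i) (int j))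
        + (\<Sum>j\<le>a-1. real ((n-i) choose (a-1-j)) * real ((n-i) choose (b-1-j)) * diag_term (int i) (int j))))"
    by (intro sum.cong refl sum_binomial_products_Suc assms)
  also have "\<dots> = conv_sum n a b + conv_sum n a (b-1) + (if a = 0 then 0 else conv_sum n (a-1) b + conv_sum n (a-1) (b-1))"
    unfolding conv_sum_def by (simp add: sum.distrib)
  finally show ?thesis .
qed

lemma conv_sum_Suc_diag:
  "conv_sum (Suc n) a a = conv_sum n a a + (if a = 0 then 0 else 2 * conv_sum n (a-1) a + conv_sum n (a-1) (a-1))
     + diag_term (int (Suc n)) (int a)"
proof -
  have last: "(\<Sum>j\<le>a. real ((Suc n - Suc n) choose (a-j)) * real ((Suc n - Suc n) choose (a-j)) * diag_term (int (Suc n)) (int j))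
     = diag_term (int (Suc n)) (int a)"
  proof -
    have "(\<Sum>j\<le>a. real ((Suc n - Suc n) choose (a-j)) * real ((Suc n - Suc n) choose (a-j)) * diag_term (int (Suc n)) (int j))
       = (\<Sum>j\<in>{a}. real ((Suc n - Suc n) choose (a-j)) * real ((Suc n - Suc n) choose (a-j)) * diag_term (int (Suc n)) (int j))"
      by (intro sum.mono_neutral_right) auto
    then show ?thesis by simp
  qed
  have "conv_sum (Suc n) a a = (\<Sum>i\<le>n. \<Sum>j\<le>a. real (Suc (n-i) choose (a-j)) * real (Suc (n-i) choose (a-j)) * diag_term (int i) (int j))
       + diag_term (int (Suc n)) (int a)"
    unfolding conv_sum_def sum.atMost_Suc last by (simp add: Suc_diff_le)
  also have "(\<Sum>i\<le>n. \<Sum>j\<le>a. real (Suc (n-i) choose (a-j)) * real (Suc (n-i) choose (a-j)) * diag_term (int i) (int j))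
     = (\<Sum>i\<le>n. (\<Sum>j\<le>a. real ((n-i) choose (a-j)) * real ((n-i) choose (a-j)) * diag_term (int i) (int j))
   + (if a = 0 then 0 else 2 * (\<Sum>j\<le>a-1. real ((n-i) choose (a-1-j)) * real ((n-i) choose (a-j)) * diag_term (int i) (int j))
        + (\<Sum>j\<le>a-1. real ((n-i) choose (a-1-j)) * real ((n-i) choose (a-1-j)) * diag_term (int i) (int j))))"
    by (intro sum.cong refl sum_binomial_squares_Suc)
  also have "\<dots> = conv_sum n a a + (if a = 0 then 0 else 2 * conv_sum n (a-1) a + conv_sum n (a-1) (a-1))"
    unfolding conv_sum_def by (simp add: sum.distrib sum_distrib_left)
  finally show ?thesis by simp
qed

lemma excess_sum_Suc:
  "excess_sum (Suc n) a b = excess_sum n a b + (if a = 0 then 0 else excess_sum n (a-1) b)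
     + (if b = 0 then 0 else excess_sum n a (b-1)) + (if a = 0 \<or> b = 0 then 0 else excess_sum n (a-1) (b-1))
     + max 0 (real a - real b) * real (Suc n choose a) * real (Suc n choose b)"
  unfolding excess_sum_def by (rule pair_sum_Suc)

lemma conv_sum_0: "conv_sum 0 a b = 0"
  unfolding conv_sum_def by (simp add: diag_term_0)

lemma excess_sum_0: "excess_sum 0 a b = 0"
  unfolding excess_sum_def by (simp add: pair_sum_0)

lemma excess_sum_eq_conv_sum: "a \<le> b \<Longrightarrow> excess_sum n a b = conv_sum n a b"
proof (induction n arbitrary: a b)
  case 0
  then show ?case by (simp add: excess_sum_0 conv_sum_0)
next
  case (Suc n)
  show ?case
  proof (cases "a < b")
    case True
    then have b0: "b \<noteq> 0" by simp
    have m: "max 0 (real a - real b) = 0" using True by simp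
    show ?thesis
      using True b0 Suc.IH[of a b] Suc.IH[of a "b-1"] Suc.IH[of "a-1" b] Suc.IH[of "a-1" "b-1"]
      by (simp add: excess_sum_Suc m conv_sum_Suc)
  next
    case False
    then have ab: "b = a" using Suc.prems by simp
    show ?thesis
    proof (cases a)
      case 0
      then show ?thesis using ab Suc.IH[of 0 0] by (simp add: excess_sum_Suc conv_sum_Suc_diag diag_term_def)
    next
      case (Suc a')
      have anti: "excess_sum n a a' = excess_sum n a' a + (real n + 1) / 2 * real (n choose a) * real (n choose a')"
        using excess_sum_antisym[of n a a'] Suc by simp
      have fsv: "diag_term (int (Suc n)) (int a) = (real n + 1) / 2 * real (n choose a) * real (n choose a')"
        using diag_term_Suc[of n a] Suc by simp
      show ?thesis
        using ab Suc Suc.IH[of a a] Suc.IH[of a' a] Suc.IH[of a' a'] anti fsv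
        by (simp add: excess_sum_Suc conv_sum_Suc_diag)
    qed
  qed
qed

section \<open>Coefficient identities\<close>

lemma binomial_int_pascal: "0 \<le> M \<Longrightarrow> binomial_int (M + 1) j = binomial_int M j + binomial_int M (j - 1)"
proof -
  assume "0 \<le> M"
  then obtain m where m: "M = int m" using nonneg_eq_int by blast
  show ?thesis
  proof (cases "j < 0")
    case False
    then obtain i where i: "j = int i" using nonneg_eq_int by (metis linorder_not_less)
    show ?thesis
    proof (cases i)
      case 0
      then show ?thesis using m i by (simp add: binomial_int_def)
    next
      case (Suc i')
      then have "binomial_int (M + 1) j = real (Suc m choose Suc i')"
        "binomial_int M (j - 1) = real (m choose i')" "binomial_int M j = real (m choose Suc i')"
        using m i binomial_int_of_nat[of "Suc m" "Suc i'"] binomial_int_of_nat[of m "Suc i'"]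
        by (simp_all add: ac_simps)
      then show ?thesis by simp
    qed
  qed simp
qed

lemma binomial_int_add2:
  "0 \<le> M \<Longrightarrow> binomial_int (M + 2) j = binomial_int M j + 2 * binomial_int M (j - 1) + binomial_int M (j - 2)"
  using binomial_int_pascal[of "M + 1" j] binomial_int_pascal[of "M + 1" "j - 1"]
    binomial_int_pascal[of M j] binomial_int_pascal[of M "j - 1"] binomial_int_pascal[of M "j - 2"]
  by (simp add: algebra_simps)

lemma binomial_int_add4:
  "0 \<le> M \<Longrightarrow> binomial_int (M + 4) j = binomial_int M j + 4 * binomial_int M (j - 1)
     + 6 * binomial_int M (j - 2) + 4 * binomial_int M (j - 3) + binomial_int M (j - 4)"
  using binomial_int_add2[of "M + 2" j] binomial_int_add2[of "M + 2" "j - 1"] binomial_int_add2[of "M + 2" "j - 2"]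
    binomial_int_add2[of M j] binomial_int_add2[of M "j - 1"] binomial_int_add2[of M "j - 2"]
    binomial_int_add2[of M "j - 3"] binomial_int_add2[of M "j - 4"]
  by (simp add: algebra_simps)

lemma binomial_int_absorb:
  "0 \<le> M \<Longrightarrow> (of_int j + 1) * binomial_int M (j + 1) = (of_int M - of_int j) * binomial_int M j"
proof -
  assume "0 \<le> M"
  then obtain m where m: "M = int m" using nonneg_eq_int by blast
  show ?thesis
  proof (cases "j < 0")
    case True
    then have "j = -1 \<or> j < -1" by auto
    then show ?thesis using True by auto
  next
    case False
    then obtain i where i: "j = int i" using nonneg_eq_int by (metis linorder_not_less)
    have "binomial_int M (j + 1) = real (m choose Suc i)"
      using m i binomial_int_of_nat[of m "Suc i"] by (simp add: ac_simps)
    then show ?thesis using of_nat_binomial_absorb_Suc[of i m] m i by (simp add: add.commute)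
  qed
qed

lemma binomial_int_0: "binomial_int 0 j = (if j = 0 then 1 else 0)"
  unfolding binomial_int_def by (auto simp: binomial_eq_0)

lemma binomial_int_1: "binomial_int 1 j = (if j = 0 \<or> j = 1 then 1 else 0)"
  using binomial_int_pascal[of 0 j] by (simp add: binomial_int_0)

lemma binomial_int_2: "binomial_int 2 j = (if j = 0 \<or> j = 2 then 1 else if j = 1 then 2 else 0)"
  using binomial_int_pascal[of 1 j] by (auto simp: binomial_int_1)

definition sq_binomial :: "int \<Rightarrow> int \<Rightarrow> real" where
  "sq_binomial i j = binomial_int i j * binomial_int i j"

definition sq_binomial_deriv :: "int \<Rightarrow> int \<Rightarrow> real" where
  "sq_binomial_deriv i j = (of_int i + 1) * sq_binomial (i + 1) j"

definition half_odd_binomial :: "int \<Rightarrow> int \<Rightarrow> real" where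
  "half_odd_binomial n a = binomial_int (2 * n + 2) (2 * a + 1) / 2"

definition diag_closed_form :: "int \<Rightarrow> int \<Rightarrow> real" where
  "diag_closed_form n a = of_int a * of_int (n - a) / (8 * of_int n + 4) * binomial_int (2 * n + 2) (2 * a + 1)"

\<comment> \<open>Coefficient of x^n y^a in the product of D = (1 - (1 + y) x)^2 - 4 y x^2, respectively of
  its x-derivative, with the series of f.\<close>
definition disc_op :: "(int \<Rightarrow> int \<Rightarrow> real) \<Rightarrow> int \<Rightarrow> int \<Rightarrow> real" where
  "disc_op f n a = f n a - 2 * f (n - 1) a - 2 * f (n - 1) (a - 1)
     + f (n - 2) a - 2 * f (n - 2) (a - 1) + f (n - 2) (a - 2)"

definition disc_deriv_op :: "(int \<Rightarrow> int \<Rightarrow> real) \<Rightarrow> int \<Rightarrow> int \<Rightarrow> real" where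
  "disc_deriv_op f n a = - 2 * f n a - 2 * f n (a - 1)
     + 2 * f (n - 1) a - 4 * f (n - 1) (a - 1) + 2 * f (n - 1) (a - 2)"

lemma disc_op_half_odd_binomial:
  assumes "0 \<le> n" "0 \<le> a"
  shows "disc_op half_odd_binomial n a = (if n = 0 \<and> a = 0 then 1 else 0)"
proof (cases "n = 0")
  case True
  have "2 * a - 1 \<noteq> 0" by presburger
  then show ?thesis
    using True assms(2) unfolding disc_op_def half_odd_binomial_def
    by (auto simp: binomial_int_0 binomial_int_2 binomial_int_neg_left)
next
  case False
  then have M: "0 \<le> 2 * n - 2" and "2 * n + 2 = (2 * n - 2) + 4" "2 * (n - 1) + 2 = (2 * n - 2) + 2"
    "2 * (n - 2) + 2 = 2 * n - 2" "2 * (a - 1) + 1 = 2 * a - 1" "2 * (a - 2) + 1 = 2 * a - 3"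
    using assms by auto
  then show ?thesis
    unfolding disc_op_def half_odd_binomial_def
    using False binomial_int_add4[OF M, of "2 * a + 1"] binomial_int_add2[OF M, of "2 * a + 1"]
      binomial_int_add2[OF M, of "2 * a - 1"]
    by (simp add: field_simps)
qed

lemma sq_binomial_ode_algebra:
  fixes p q r N A :: real
  assumes "A * p = (N - A) * q" "(A - 1) * q = (N - A + 1) * r"
  shows "2 * ((N + 1) * ((p + 2*q + r) * (p + 2*q + r)) - 2 * (N * ((p + q) * (p + q)))
      - 2 * (N * ((q + r) * (q + r))) + (N - 1) * (p * p) - 2 * ((N - 1) * (q * q)) + (N - 1) * (r * r))
    + (- 2 * ((p + q) * (p + q)) - 2 * ((q + r) * (q + r)) + 2 * (p * p) - 4 * (q * q) + 2 * (r * r)) = 0"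
  using assms by algebra

lemma sq_binomial_ode:
  assumes "0 \<le> n" "0 \<le> a"
  shows "2 * disc_op sq_binomial_deriv n a + disc_deriv_op sq_binomial n a = 0"
proof (cases "n = 0")
  case True
  have "a = 0 \<or> a = 1 \<or> a \<ge> 2" using assms(2) by auto
  then show ?thesis
    using True unfolding disc_op_def disc_deriv_op_def sq_binomial_deriv_def sq_binomial_def
    by (elim disjE) (auto simp: binomial_int_0 binomial_int_1 binomial_int_neg_left)
next
  case False
  define M where "M = n - 1"
  have M: "0 \<le> M" and n: "n = M + 1" using assms False unfolding M_def by auto
  have "of_int a * binomial_int M a = (of_int n - of_int a) * binomial_int M (a - 1)"
    "(of_int a - 1) * binomial_int M (a - 1) = (of_int n - of_int a + 1) * binomial_int M (a - 2)"
    using binomial_int_absorb[OF M, of "a - 1"] binomial_int_absorb[OF M, of "a - 2"] n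
    by (simp_all add: algebra_simps)
  note algebra = sq_binomial_ode_algebra[OF this]
  have "binomial_int (2 + M) a = binomial_int M a + 2 * binomial_int M (a - 1) + binomial_int M (a - 2)"
    "binomial_int (1 + M) a = binomial_int M a + binomial_int M (a - 1)"
    "binomial_int (1 + M) (a - 1) = binomial_int M (a - 1) + binomial_int M (a - 2)"
    using binomial_int_add2[OF M, of a] binomial_int_pascal[OF M, of a] binomial_int_pascal[OF M, of "a - 1"]
    by (simp_all add: add.commute)
  then show ?thesis
    using algebra unfolding disc_op_def disc_deriv_op_def sq_binomial_deriv_def sq_binomial_def n
    by (simp add: algebra_simps)
qed

lemma diag_term_recurrence_algebra:
  fixes p0 p1 p2 p3 N A :: real
  assumes "A * p0 = (N - A - 2) * p1" "(A - 1) * p1 = (N - A - 1) * p2" "(A - 2) * p2 = (N - A) * p3"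
  shows "N / 2 * ((p0 + 2*p1 + p2) * (p1 + 2*p2 + p3)) - 2 * ((N - 1) / 2 * ((p0 + p1) * (p1 + p2)))
     - 2 * ((N - 1) / 2 * ((p1 + p2) * (p2 + p3))) + (N - 2) / 2 * (p0 * p1)
     - 2 * ((N - 2) / 2 * (p1 * p2)) + (N - 2) / 2 * (p2 * p3) = (p1 + p2) * (p1 + p2)"
proof -
  have "N * ((p0 + 2*p1 + p2) * (p1 + 2*p2 + p3)) - 2 * ((N - 1) * ((p0 + p1) * (p1 + p2)))
     - 2 * ((N - 1) * ((p1 + p2) * (p2 + p3))) + (N - 2) * (p0 * p1)
     - 2 * ((N - 2) * (p1 * p2)) + (N - 2) * (p2 * p3) = 2 * ((p1 + p2) * (p1 + p2))"
    using assms by algebra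
  then show ?thesis by (simp add: field_simps)
qed

lemma disc_op_diag_term:
  assumes "0 \<le> n" "0 \<le> a"
  shows "disc_op diag_term n a = sq_binomial (n - 2) (a - 1)"
proof -
  have vanish: "diag_term i j = 0" if "i < 1" for i j
    using that unfolding diag_term_def by (cases "i = 0") (auto simp: binomial_int_neg_left)
  have diag_term_1: "diag_term 1 j = 0" for j
    unfolding diag_term_def by (auto simp: binomial_int_0)
  consider "n = 0" | "n = 1" | "n = 2" | "n \<ge> 3" using assms(1) by linarith
  then show ?thesis
  proof cases
    case 1
    then show ?thesis unfolding disc_op_def sq_binomial_def by (simp add: vanish binomial_int_neg_left)
  next
    case 2
    then show ?thesis unfolding disc_op_def sq_binomial_def by (simp add: vanish diag_term_1 binomial_int_neg_left)
  next
    case 3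
    then show ?thesis unfolding disc_op_def sq_binomial_def diag_term_def
      by (auto simp: vanish diag_term_1 binomial_int_0 binomial_int_1)
  next
    case 4
    define M where "M = n - 3"
    have M: "0 \<le> M" and n: "n = M + 3" using 4 unfolding M_def by auto
    have "of_int a * binomial_int M a = (of_int n - of_int a - 2) * binomial_int M (a - 1)"
      "(of_int a - 1) * binomial_int M (a - 1) = (of_int n - of_int a - 1) * binomial_int M (a - 2)"
      "(of_int a - 2) * binomial_int M (a - 2) = (of_int n - of_int a) * binomial_int M (a - 3)"
      using binomial_int_absorb[OF M, of "a - 1"] binomial_int_absorb[OF M, of "a - 2"]
        binomial_int_absorb[OF M, of "a - 3"] n
      by (simp_all add: algebra_simps)
    note algebra = diag_term_recurrence_algebra[OF this]
    let ?N = "of_int n :: real" and ?p = "\<lambda>d. binomial_int M (a - d)"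
    have add2: "binomial_int (2 + M) j = binomial_int M j + 2 * binomial_int M (j - 1) + binomial_int M (j - 2)"
      and add1: "binomial_int (1 + M) j = binomial_int M j + binomial_int M (j - 1)" for j
      using binomial_int_add2[OF M, of j] binomial_int_pascal[OF M, of j] by (simp_all add: add.commute)
    have "diag_term n a = ?N / 2 * ((?p 0 + 2 * ?p 1 + ?p 2) * (?p 1 + 2 * ?p 2 + ?p 3))"
      "diag_term (n - 1) a = (?N - 1) / 2 * ((?p 0 + ?p 1) * (?p 1 + ?p 2))"
      "diag_term (n - 1) (a - 1) = (?N - 1) / 2 * ((?p 1 + ?p 2) * (?p 2 + ?p 3))"
      "diag_term (n - 2) a = (?N - 2) / 2 * (?p 0 * ?p 1)"
      "diag_term (n - 2) (a - 1) = (?N - 2) / 2 * (?p 1 * ?p 2)"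
      "diag_term (n - 2) (a - 2) = (?N - 2) / 2 * (?p 2 * ?p 3)"
      "sq_binomial (n - 2) (a - 1) = (?p 1 + ?p 2) * (?p 1 + ?p 2)"
      unfolding diag_term_def sq_binomial_def n
      by (simp_all add: add1 add2 binomial_int_add2[OF M] binomial_int_pascal[OF M] field_simps)
    then show ?thesis unfolding disc_op_def using algebra by simp
  qed
qed

lemma diag_closed_form_recurrence_algebra:
  fixes b0 b1 b2 b3 b4 N A :: real
  assumes "(2*A-2)*b1 = (2*N-2-2*A+3)*b0" "(2*A-1)*b2 = (2*N-2-2*A+2)*b1"
    "(2*A)*b3 = (2*N-2-2*A+1)*b2" "(2*A+1)*b4 = (2*N-2-2*A)*b3"
    and d: "8*N+4 \<noteq> 0" "8*N-4 \<noteq> 0" "8*N-12 \<noteq> 0"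
  shows "A*(N-A)/(8*N+4)*(b4+4*b3+6*b2+4*b1+b0) - 2*(A*(N-1-A)/(8*N-4)*(b4+2*b3+b2))
     - 2*((A-1)*(N-A)/(8*N-4)*(b2+2*b1+b0)) + A*(N-2-A)/(8*N-12)*b4
     - 2*((A-1)*(N-1-A)/(8*N-12)*b2) + (A-2)*(N-A)/(8*N-12)*b0 = b2/2"
proof -
  define PP where "PP = 2*(A*(N-A)*(8*N-4)*(8*N-12)*(b4+4*b3+6*b2+4*b1+b0) - 2*(A*(N-1-A)*(8*N+4)*(8*N-12)*(b4+2*b3+b2))
     - 2*((A-1)*(N-A)*(8*N+4)*(8*N-12)*(b2+2*b1+b0)) + A*(N-2-A)*(8*N+4)*(8*N-4)*b4
     - 2*((A-1)*(N-1-A)*(8*N+4)*(8*N-4)*b2) + (A-2)*(N-A)*(8*N+4)*(8*N-4)*b0)"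
  have P: "PP = b2*((8*N+4)*(8*N-4)*(8*N-12))"
    unfolding PP_def using assms(1-4) by algebra
  have L: "A*(N-A)/(8*N+4)*(b4+4*b3+6*b2+4*b1+b0) - 2*(A*(N-1-A)/(8*N-4)*(b4+2*b3+b2))
     - 2*((A-1)*(N-A)/(8*N-4)*(b2+2*b1+b0)) + A*(N-2-A)/(8*N-12)*b4
     - 2*((A-1)*(N-1-A)/(8*N-12)*b2) + (A-2)*(N-A)/(8*N-12)*b0 = PP / (2*((8*N+4)*(8*N-4)*(8*N-12)))"
    unfolding PP_def using d by (simp add: divide_simps) (simp add: algebra_simps)
  show ?thesis unfolding L P using d by simp
qed

lemma disc_op_diag_closed_form:
  assumes "0 \<le> n" "0 \<le> a"
  shows "disc_op diag_closed_form n a = half_odd_binomial (n - 2) (a - 1)"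
proof (cases "n = 0")
  case True
  have "2 * j + 1 \<noteq> 0" for j :: int by presburger
  then have "diag_closed_form (- 1) j = 0" "diag_closed_form (- 2) j = 0" "diag_closed_form 0 a = 0"
    "half_odd_binomial (- 2) j = 0" for j
    using assms(2) unfolding diag_closed_form_def half_odd_binomial_def
    by (auto simp: binomial_int_0 binomial_int_2 binomial_int_neg_left)
  then show ?thesis using True unfolding disc_op_def by simp
next
  case False
  define M where "M = 2 * n - 2"
  have M: "0 \<le> M" and n: "2 * n + 2 = M + 4" "2 * (n - 1) + 2 = M + 2" "2 * (n - 2) + 2 = M"
    using assms False unfolding M_def by auto
  let ?N = "of_int n :: real" and ?A = "of_int a :: real" and ?b = "\<lambda>d. binomial_int M (2 * a - 3 + d)"
  have "(2 * ?A - 2) * ?b 1 = (2 * ?N - 2 - 2 * ?A + 3) * ?b 0"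
    "(2 * ?A - 1) * ?b 2 = (2 * ?N - 2 - 2 * ?A + 2) * ?b 1"
    "(2 * ?A) * ?b 3 = (2 * ?N - 2 - 2 * ?A + 1) * ?b 2"
    "(2 * ?A + 1) * ?b 4 = (2 * ?N - 2 - 2 * ?A) * ?b 3"
    using binomial_int_absorb[OF M, of "2 * a - 3"] binomial_int_absorb[OF M, of "2 * a - 2"]
      binomial_int_absorb[OF M, of "2 * a - 1"] binomial_int_absorb[OF M, of "2 * a"]
    unfolding M_def by (simp_all add: algebra_simps)
  moreover have "8 * ?N + 4 \<noteq> 0" "8 * ?N - 4 \<noteq> 0" "8 * ?N - 12 \<noteq> 0"
  proof -
    have "8 * n + 4 \<noteq> 0" "8 * n - 4 \<noteq> 0" "8 * n - 12 \<noteq> 0" by presburger+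
    then have "real_of_int (8 * n + 4) \<noteq> 0" "real_of_int (8 * n - 4) \<noteq> 0" "real_of_int (8 * n - 12) \<noteq> 0"
      by simp_all
    then show "8 * ?N + 4 \<noteq> 0" "8 * ?N - 4 \<noteq> 0" "8 * ?N - 12 \<noteq> 0" by simp_all
  qed
  ultimately have algebra: "?A * (?N - ?A) / (8 * ?N + 4) * (?b 4 + 4 * ?b 3 + 6 * ?b 2 + 4 * ?b 1 + ?b 0)
      - 2 * (?A * (?N - 1 - ?A) / (8 * ?N - 4) * (?b 4 + 2 * ?b 3 + ?b 2))
      - 2 * ((?A - 1) * (?N - ?A) / (8 * ?N - 4) * (?b 2 + 2 * ?b 1 + ?b 0))
      + ?A * (?N - 2 - ?A) / (8 * ?N - 12) * ?b 4
      - 2 * ((?A - 1) * (?N - 1 - ?A) / (8 * ?N - 12) * ?b 2)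
      + (?A - 2) * (?N - ?A) / (8 * ?N - 12) * ?b 0 = ?b 2 / 2"
    by (rule diag_closed_form_recurrence_algebra)
  have "2 * (a - 1) + 1 = 2 * a - 3 + 2" "2 * (a - 2) + 1 = 2 * a - 3" "2 * a + 1 = 2 * a - 3 + 4" by simp_all
  then show ?thesis
    unfolding disc_op_def diag_closed_form_def half_odd_binomial_def n
    using binomial_int_add4[OF M, of "2 * a + 1"] binomial_int_add2[OF M, of "2 * a + 1"]
      binomial_int_add2[OF M, of "2 * a - 1"] algebra
    by (simp add: algebra_simps)
qed

section \<open>Bivariate generating functions\<close>

unbundle fps_syntax

\<comment> \<open>The series \<Sum> f n a x^n y^a, with x the outer and y the inner variable.\<close>
definition fps2 :: "(int \<Rightarrow> int \<Rightarrow> real) \<Rightarrow> real fps fps" where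
  "fps2 f = Abs_fps (\<lambda>n. Abs_fps (\<lambda>a. f (int n) (int a)))"

definition disc :: "real fps fps" where
  "disc = 1 - fps_const (2 * (1 + fps_X)) * fps_X + fps_const ((1 - fps_X)^2) * fps_X^2"

definition vanishes_negative :: "(int \<Rightarrow> int \<Rightarrow> real) \<Rightarrow> bool" where
  "vanishes_negative f \<longleftrightarrow> (\<forall>i j. i < 0 \<or> j < 0 \<longrightarrow> f i j = 0)"

lemma fps2_nth [simp]: "fps2 f $ n $ a = f (int n) (int a)"
  unfolding fps2_def by simp

lemma fps_numeral_mult_nth: "(numeral k * (p :: 'a::comm_semiring_1 fps)) $ n = numeral k * p $ n"
  by (simp add: numeral_fps_const)

lemma fps_X_power_mult_Abs_fps_int:
  fixes h :: "int \<Rightarrow> 'a::comm_semiring_1"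
  assumes "\<And>j. j < 0 \<Longrightarrow> h j = 0"
  shows "(fps_X ^ d * Abs_fps (\<lambda>a. h (int a))) $ a = h (int a - int d)"
  using assms by (simp add: fps_X_power_mult_nth of_nat_diff)

lemma fps_X_power_mult_fps2_nth:
  assumes "vanishes_negative f"
  shows "(fps_X ^ d * fps2 f) $ n $ a = f (int n - int d) (int a)"
proof -
  have "(fps_X ^ d * fps2 f) $ n = Abs_fps (\<lambda>a. f (int n - int d) (int a))"
    using fps_X_power_mult_Abs_fps_int[of "\<lambda>i. Abs_fps (\<lambda>a. f i (int a))" d n] assms
    unfolding fps2_def vanishes_negative_def by (simp add: fps_eq_iff)
  then show ?thesis by simp
qed

lemma vanishes_negative_row:
  "vanishes_negative f \<Longrightarrow> j < 0 \<Longrightarrow> f i j = 0"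
  unfolding vanishes_negative_def by simp

lemma disc_mult_fps2_nth:
  assumes f: "vanishes_negative f"
  shows "(disc * fps2 f) $ n $ a = disc_op f (int n) (int a)"
proof -
  let ?row = "\<lambda>i. Abs_fps (\<lambda>a. f i (int a))"
  have shift: "(fps_X ^ d * fps2 f) $ n = ?row (int n - int d)" for d
    using fps_X_power_mult_fps2_nth[OF f] by (simp add: fps_eq_iff)
  have "(disc * fps2 f) $ n = (fps2 f - fps_const (2 * (1 + fps_X)) * (fps_X ^ 1 * fps2 f)
      + fps_const ((1 - fps_X)^2) * (fps_X ^ 2 * fps2 f)) $ n"
    unfolding disc_def by (simp add: algebra_simps)
  also have "\<dots> = ?row (int n) - 2 * (?row (int n - 1) + fps_X ^ 1 * ?row (int n - 1))
      + (?row (int n - 2) - 2 * (fps_X ^ 1 * ?row (int n - 2)) + fps_X ^ 2 * ?row (int n - 2))"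
    unfolding fps_add_nth fps_sub_nth fps_mult_left_const_nth shift
    by (simp add: fps2_def power2_eq_square algebra_simps)
  finally show ?thesis
    unfolding disc_op_def
    by (simp add: fps_X_power_mult_Abs_fps_int vanishes_negative_row[OF f] numeral_fps_const)
qed

lemma fps_deriv_disc_mult_fps2_nth:
  assumes f: "vanishes_negative f"
  shows "(fps_deriv disc * fps2 f) $ n $ a = disc_deriv_op f (int n) (int a)"
proof -
  let ?row = "\<lambda>i. Abs_fps (\<lambda>a. f i (int a))"
  have shift: "(fps_X ^ d * fps2 f) $ n = ?row (int n - int d)" for d
    using fps_X_power_mult_fps2_nth[OF f] by (simp add: fps_eq_iff)
  have "fps_deriv disc = - fps_const (2 * (1 + fps_X)) + 2 * (fps_const ((1 - fps_X)^2) * fps_X)"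
    unfolding disc_def by (simp add: fps_deriv_power algebra_simps numeral_fps_const)
  then have "fps_deriv disc * fps2 f = - (fps_const (2 * (1 + fps_X)) * (fps_X ^ 0 * fps2 f))
      + 2 * (fps_const ((1 - fps_X)^2) * (fps_X ^ 1 * fps2 f))"
    by (simp only: distrib_right minus_mult_left mult.assoc power_0 power_one_right mult_1)
  then have "(fps_deriv disc * fps2 f) $ n = - (fps_const (2 * (1 + fps_X)) * (fps_X ^ 0 * fps2 f)) $ n
      + 2 * (fps_const ((1 - fps_X)^2) * (fps_X ^ 1 * fps2 f)) $ n"
    by (simp only: fps_add_nth fps_numeral_mult_nth)
  also have "\<dots> = - (2 * (?row (int n) + fps_X ^ 1 * ?row (int n)))
      + 2 * (?row (int n - 1) - 2 * (fps_X ^ 1 * ?row (int n - 1)) + fps_X ^ 2 * ?row (int n - 1))"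
    unfolding fps_neg_nth fps_mult_left_const_nth shift
    by (simp add: power2_eq_square algebra_simps)
  finally show ?thesis
    unfolding disc_deriv_op_def
    by (simp add: fps_X_power_mult_Abs_fps_int vanishes_negative_row[OF f] numeral_fps_const)
qed

lemma x2y_mult_fps2_nth:
  assumes f: "vanishes_negative f"
  shows "(fps_const fps_X * fps_X ^ 2 * fps2 f) $ n $ a = f (int n - 2) (int a - 1)"
proof -
  have "(fps_const fps_X * fps_X ^ 2 * fps2 f) $ n = fps_X ^ 1 * Abs_fps (\<lambda>a. f (int n - 2) (int a))"
    using fps_X_power_mult_fps2_nth[OF f, of 2 n] by (simp add: mult.assoc fps_eq_iff)
  then show ?thesis
    by (simp add: fps_X_power_mult_Abs_fps_int vanishes_negative_row[OF f])
qed

lemma vanishes_negative_coefficients: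
  "vanishes_negative sq_binomial" "vanishes_negative sq_binomial_deriv" "vanishes_negative diag_term"
  "vanishes_negative half_odd_binomial" "vanishes_negative diag_closed_form"
proof -
  have "2 * j + 1 \<noteq> 0" for j :: int by presburger
  moreover have "i < 0 \<Longrightarrow> i = - 1 \<or> i < - 1" for i :: int by auto
  ultimately show "vanishes_negative sq_binomial" "vanishes_negative sq_binomial_deriv" "vanishes_negative diag_term"
    "vanishes_negative half_odd_binomial" "vanishes_negative diag_closed_form"
    unfolding vanishes_negative_def sq_binomial_def sq_binomial_deriv_def diag_term_def
      half_odd_binomial_def diag_closed_form_def
    by (fastforce simp: binomial_int_neg_left binomial_int_0)+
qed

lemma fps_deriv_fps2_sq_binomial: "fps_deriv (fps2 sq_binomial) = fps2 sq_binomial_deriv"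
proof (intro fps_ext)
  fix n a
  have "(of_nat (Suc n) * fps2 sq_binomial $ Suc n :: real fps) $ a = of_nat (Suc n) * sq_binomial (1 + int n) (int a)"
    by (simp flip: fps_of_nat)
  then show "fps_deriv (fps2 sq_binomial) $ n $ a = fps2 sq_binomial_deriv $ n $ a"
    by (simp add: fps_deriv_nth sq_binomial_deriv_def add.commute)
qed

lemma disc_nth_0: "disc $ 0 = 1"
  unfolding disc_def by (simp add: fps_X_power_mult_nth)

lemma fps2_sq_binomial_sq_mult_disc: "fps2 sq_binomial * fps2 sq_binomial * disc = 1"
proof -
  let ?F = "fps2 sq_binomial"
  \<comment> \<open>The ODE 2 D F' + D' F = 0 makes (F^2 D)' = F (2 D F' + D' F) vanish.\<close>
  have ode: "2 * (disc * fps_deriv ?F) + fps_deriv disc * ?F = 0"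
    by (intro fps_ext) (simp add: fps_numeral_mult_nth fps_deriv_fps2_sq_binomial disc_mult_fps2_nth
      fps_deriv_disc_mult_fps2_nth vanishes_negative_coefficients sq_binomial_ode)
  have "fps_deriv (?F * ?F * disc) = ?F * (2 * (disc * fps_deriv ?F) + fps_deriv disc * ?F)"
    by (simp add: algebra_simps)
  then have "fps_deriv (?F * ?F * disc) = 0"
    by (simp only: ode mult_zero_right)
  then have "?F * ?F * disc = fps_const ((?F * ?F * disc) $ 0)"
    by (simp only: fps_deriv_eq_0_iff)
  moreover have "?F $ 0 = 1"
    by (intro fps_ext) (simp add: sq_binomial_def binomial_int_0)
  ultimately show ?thesis by (simp add: fps_mult_nth disc_nth_0)
qed

lemma fps2_diag_term_mult_disc: "fps2 diag_term * disc = fps_const fps_X * fps_X ^ 2 * fps2 sq_binomial"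
  by (intro fps_ext) (simp add: mult.commute[of "fps2 _"] disc_mult_fps2_nth x2y_mult_fps2_nth
    vanishes_negative_coefficients disc_op_diag_term)

lemma fps2_half_odd_binomial_mult_disc: "fps2 half_odd_binomial * disc = 1"
  by (intro fps_ext) (simp add: mult.commute[of "fps2 _"] disc_mult_fps2_nth
    vanishes_negative_coefficients disc_op_half_odd_binomial)

lemma fps2_diag_closed_form_mult_disc:
  "fps2 diag_closed_form * disc = fps_const fps_X * fps_X ^ 2 * fps2 half_odd_binomial"
  by (intro fps_ext) (simp add: mult.commute[of "fps2 _"] disc_mult_fps2_nth x2y_mult_fps2_nth
    vanishes_negative_coefficients disc_op_diag_closed_form)

lemma fps2_diag_term_mult_sq_binomial: "fps2 diag_term * fps2 sq_binomial = fps2 diag_closed_form"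
proof -
  have "disc \<noteq> 0" using disc_nth_0 by auto
  \<comment> \<open>Multiplied by D^2, both sides become x^2 y.\<close>
  have "fps2 diag_term * fps2 sq_binomial * (disc * disc)
      = fps_const fps_X * fps_X ^ 2 * (fps2 sq_binomial * fps2 sq_binomial * disc)"
    using fps2_diag_term_mult_disc by (simp add: algebra_simps)
  also have "\<dots> = fps2 diag_closed_form * (disc * disc)"
    using fps2_sq_binomial_sq_mult_disc fps2_diag_closed_form_mult_disc fps2_half_odd_binomial_mult_disc
    by (simp add: algebra_simps)
  finally show ?thesis using \<open>disc \<noteq> 0\<close> by simp
qed

lemma conv_sum_diag: "conv_sum n a a = diag_closed_form (int n) (int a)"
proof -
  have "(fps2 diag_term * fps2 sq_binomial) $ n $ a
      = (\<Sum>i\<le>n. \<Sum>j\<le>a. diag_term (int i) (int j) * sq_binomial (int (n - i)) (int (a - j)))"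
    by (simp add: fps_mult_nth fps_sum_nth atMost_atLeast0)
  also have "\<dots> = (\<Sum>i\<le>n. \<Sum>j\<le>a. diag_term (int i) (int j) * (real ((n - i) choose (a - j)) * real ((n - i) choose (a - j))))"
    by (simp only: sq_binomial_def binomial_int_of_nat)
  also have "\<dots> = conv_sum n a a"
    unfolding conv_sum_def by (simp add: mult.commute)
  finally show ?thesis by (simp add: fps2_diag_term_mult_sq_binomial)
qed

lemma diag_closed_form_of_nat:
  "diag_closed_form (int (m + k)) (int m)
     = real m * real k / (8 * real (m + k) + 4) * real ((2 * (m + k) + 2) choose (2 * m + 1))"
proof -
  have "2 * int (m + k) + 2 = int (2 * (m + k) + 2)" "2 * int m + 1 = int (2 * m + 1)" by simp_all
  then have "binomial_int (2 * int (m + k) + 2) (2 * int m + 1) = real ((2 * (m + k) + 2) choose (2 * m + 1))"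
    by (simp only: binomial_int_of_nat)
  then show ?thesis unfolding diag_closed_form_def by simp
qed

theorem corollary1p2:
  fixes m k :: nat
  shows "real (wiener (P_mk m k) (\<subseteq>)) =
    real (m * k) / real (4 * m + 4 * k + 2) * real ((2 * m + 2 * k + 2) choose (2 * k + 1))"
proof -
  have "real (wiener (P_mk m k) (\<subseteq>)) = (\<Sum>I\<in>P_mk m k. \<Sum>J\<in>P_mk m k. real (card (sym_diff I J)))"
    unfolding wiener_def of_nat_sum by (intro sum.cong refl) (simp add: hasse_dist_P_mk)
  also have "\<dots> = 2 * excess_sum (m + k) m m"
    by (simp add: sum_card_sym_diff_P_mk pair_sum_abs_eq_excess_sum)
  also have "\<dots> = 2 * diag_closed_form (int (m + k)) (int m)"
    by (simp add: excess_sum_eq_conv_sum conv_sum_diag)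
  also have "\<dots> = 2 * (real m * real k) / (8 * real (m + k) + 4) * real ((2 * (m + k) + 2) choose (2 * m + 1))"
    unfolding diag_closed_form_of_nat by simp
  also have "(2 * (m + k) + 2) choose (2 * m + 1) = (2 * m + 2 * k + 2) choose (2 * k + 1)"
    using binomial_symmetric[of "2 * m + 1" "2 * (m + k) + 2"] by simp
  finally show ?thesis
    by (simp add: field_simps)
qed

end
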